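(* In every dynamic network congestion game, there exists a blind Nash equilibrium.
   Context: An arena is $\mathcal A=(V,E,\mathsf{src},\mathsf{tgt})$ with $V$ finite, $E$ a partial function from $V\times V$ to non-decreasing piecewise-affine functions $\mathbb N\to\mathbb N$ (edge $e$ has cost function $\ell_e$); $\mathsf{tgt}$ has only a self-loop of constant cost $0$ and is reachable from every state. A dynamic NCG $(\mathcal A,n)$ has players $[n]$ all starting in $\mathsf{src}$; in each step each player simultaneously picks an edge leaving their current state, moves along it and pays $\ell_e(u)$, $u$ being the number of players choosing that same edge $e$ in that step. Strategies map finite histories to edges; $\mathrm{cost}_i(\sigma)$ is player $i$'s total payment along the outcome of $\sigma$ until reaching $\mathsf{tgt}$ ($+\infty$ if never). A strategy is blind if it depends only on the sequence of states visited by the player itself (it follows a fixed path of $\mathcal A$). A blind Nash equilibrium is a profile $\sigma$ of blind strategies such that for all $k$, $\mathrm{cost}_k(\sigma)=\inf_{\sigma'_k\text{ blind}}\mathrm{cost}_k(\langle\sigma_{-k},\sigma'_k\rangle)$, where $\langle\sigma_{-k},\sigma'_k\rangle$ replaces $\sigma_k$ by $\sigma'_k$. *)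

theory Defs
  imports Main "HOL-Library.Extended_Nat"
begin

(* An arena: states of a finite type 'v; E v w = Some l means there is an edge
   (v,w) with cost function l; src and tgt are the source and target states. *)

definition affine_on :: "(nat \<Rightarrow> nat) \<Rightarrow> nat set \<Rightarrow> bool" where
  "affine_on f S \<longleftrightarrow> (\<exists>a b :: real. \<forall>x\<in>S. real (f x) = a * real x + b)"

(* f is piecewise affine: finitely many breakpoints B (with 0 \<in> B); on each piece
   [c, next breakpoint) starting at a breakpoint c, f is affine. *)
definition piecewise_affine :: "(nat \<Rightarrow> nat) \<Rightarrow> bool" where
  "piecewise_affine f \<longleftrightarrow>
     (\<exists>B. finite B \<and> 0 \<in> B \<and>
        (\<forall>c\<in>B. affine_on f {x. c \<le> x \<and> (\<forall>b\<in>B. b \<le> c \<or> x < b)}))"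

definition arena :: "('v::finite \<Rightarrow> 'v \<Rightarrow> (nat \<Rightarrow> nat) option) \<Rightarrow> 'v \<Rightarrow> 'v \<Rightarrow> bool" where
  "arena E src tgt \<longleftrightarrow>
     (\<forall>v w l. E v w = Some l \<longrightarrow> mono l \<and> piecewise_affine l) \<and>
     (\<forall>w. E tgt w \<noteq> None \<longleftrightarrow> w = tgt) \<and>
     E tgt tgt = Some (\<lambda>_. 0) \<and>
     (\<forall>v. (v, tgt) \<in> {(a, b). E a b \<noteq> None}\<^sup>*)"

(* A blind strategy maps the (nonempty) sequence of states visited by the player
   itself to the next state, i.e. to an edge leaving the current state. *)
definition blind_strategy :: "('v \<Rightarrow> 'v \<Rightarrow> (nat \<Rightarrow> nat) option) \<Rightarrow> ('v list \<Rightarrow> 'v) \<Rightarrow> bool" where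
  "blind_strategy E s \<longleftrightarrow> (\<forall>h. h \<noteq> [] \<longrightarrow> E (last h) (s h) \<noteq> None)"

fun hist :: "'v \<Rightarrow> ('v list \<Rightarrow> 'v) \<Rightarrow> nat \<Rightarrow> 'v list" where
  "hist src s 0 = [src]"
| "hist src s (Suc t) = hist src s t @ [s (hist src s t)]"

definition pos :: "'v \<Rightarrow> ('v list \<Rightarrow> 'v) \<Rightarrow> nat \<Rightarrow> 'v" where
  "pos src s t = last (hist src s t)"

definition step_edge :: "'v \<Rightarrow> ('v list \<Rightarrow> 'v) \<Rightarrow> nat \<Rightarrow> 'v \<times> 'v" where
  "step_edge src s t = (pos src s t, pos src s (Suc t))"

definition load :: "'v \<Rightarrow> nat \<Rightarrow> (nat \<Rightarrow> 'v list \<Rightarrow> 'v) \<Rightarrow> nat \<Rightarrow> 'v \<times> 'v \<Rightarrow> nat" where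
  "load src n P t e = card {j. j < n \<and> step_edge src (P j) t = e}"

definition step_cost :: "('v \<Rightarrow> 'v \<Rightarrow> (nat \<Rightarrow> nat) option) \<Rightarrow> 'v \<Rightarrow> nat \<Rightarrow>
    (nat \<Rightarrow> 'v list \<Rightarrow> 'v) \<Rightarrow> nat \<Rightarrow> nat \<Rightarrow> nat" where
  "step_cost E src n P i t =
     (let e = step_edge src (P i) t in the (E (fst e) (snd e)) (load src n P t e))"

definition cost :: "('v \<Rightarrow> 'v \<Rightarrow> (nat \<Rightarrow> nat) option) \<Rightarrow> 'v \<Rightarrow> 'v \<Rightarrow> nat \<Rightarrow>
    (nat \<Rightarrow> 'v list \<Rightarrow> 'v) \<Rightarrow> nat \<Rightarrow> enat" where
  "cost E src tgt n P i =
     (if \<exists>t. pos src (P i) t = tgt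
      then enat (\<Sum>t < (LEAST t. pos src (P i) t = tgt). step_cost E src n P i t)
      else \<infinity>)"

definition blind_NE :: "('v \<Rightarrow> 'v \<Rightarrow> (nat \<Rightarrow> nat) option) \<Rightarrow> 'v \<Rightarrow> 'v \<Rightarrow> nat \<Rightarrow>
    (nat \<Rightarrow> 'v list \<Rightarrow> 'v) \<Rightarrow> bool" where
  "blind_NE E src tgt n P \<longleftrightarrow>
     (\<forall>i<n. blind_strategy E (P i)) \<and>
     (\<forall>k<n. cost E src tgt n P k =
              (INF s \<in> {s. blind_strategy E s}. cost E src tgt n (P(k := s)) k))"

end

theory Submission
  imports Defs
begin

text \<open>
  Rosenthal's potential argument, over a finite horizon. For a profile \<open>P\<close> in which every
  player reaches \<open>tgt\<close> within \<open>T\<close> steps, let the potential be the sum over steps \<open>t < T\<close> and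
  edges \<open>e\<close> of \<open>\<ell>\<^sub>e(1) + \<dots> + \<ell>\<^sub>e(load)\<close>. A player's unilateral deviation changes the potential by
  exactly the change of that player's cost, since the loads caused by the other players do not
  change. Extending the horizon does not change the potential, because players resting in \<open>tgt\<close>
  pay \<open>0\<close>; deviations that never reach \<open>tgt\<close> cost \<open>\<infinity>\<close>. Hence a profile of minimal
  (natural-number valued) potential is a blind Nash equilibrium.
\<close>

lemma hist_not_Nil: "hist src s t \<noteq> []"
  by (induct t) auto

lemma length_hist: "length (hist src s t) = Suc t"
  by (induct t) auto

lemma pos_0: "pos src s 0 = src"
  by (simp add: pos_def)

lemma pos_Suc: "pos src s (Suc t) = s (hist src s t)"
  by (simp add: pos_def)

lemma blind_strategy_edge_pos:
  assumes "blind_strategy E s"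
  shows "E (pos src s t) (pos src s (Suc t)) \<noteq> None"
proof -
  have "E (last (hist src s t)) (s (hist src s t)) \<noteq> None"
    using assms hist_not_Nil[of src s t] unfolding blind_strategy_def by blast
  then show ?thesis by (simp add: pos_def)
qed

lemma arena_pos_tgt_absorbing:
  assumes arena: "arena E src tgt" and "blind_strategy E s"
    and at_tgt: "pos src s T = tgt" and "T \<le> t"
  shows "pos src s t = tgt"
  using \<open>T \<le> t\<close>
proof (induct t rule: dec_induct)
  case base
  show ?case by (fact at_tgt)
next
  case (step m)
  then have "E tgt (pos src s (Suc m)) \<noteq> None"
    using blind_strategy_edge_pos[OF \<open>blind_strategy E s\<close>, of src m] by simp
  then show ?case using arena unfolding arena_def by blast
qed

lemma arena_has_successor:
  assumes "arena E src tgt"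
  shows "\<exists>w. E v w \<noteq> None"
proof (cases "v = tgt")
  case True
  then show ?thesis using assms unfolding arena_def by blast
next
  case False
  have "(v, tgt) \<in> {(a, b). E a b \<noteq> None}\<^sup>*" using assms unfolding arena_def by blast
  then show ?thesis using False by (cases rule: converse_rtranclE) auto
qed

lemma arena_blind_strategy_reaching_tgt:
  assumes arena: "arena E src tgt"
  obtains s T where "blind_strategy E s" and "pos src s T = tgt"
proof -
  have "(src, tgt) \<in> {(a, b). E a b \<noteq> None}\<^sup>*" using arena unfolding arena_def by blast
  then obtain N where "(src, tgt) \<in> {(a, b). E a b \<noteq> None} ^^ N"
    using rtrancl_imp_relpow by blast
  then obtain f where f0: "f 0 = src" and fN: "f N = tgt"
    and f_edge: "\<And>i. i < N \<Longrightarrow> E (f i) (f (Suc i)) \<noteq> None"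
    unfolding relpow_fun_conv by blast
  text \<open>Along the path \<open>f\<close> the first branch applies; the fallback only makes \<open>s\<close> blind on
    histories off the path.\<close>
  define s where "s h = (if E (last h) (f (length h)) \<noteq> None then f (length h)
                          else (SOME w. E (last h) w \<noteq> None))" for h
  have s_follows_f: "s h = f (length h)" if "E (last h) (f (length h)) \<noteq> None" for h
    using that by (simp add: s_def)
  have "blind_strategy E s"
    unfolding blind_strategy_def s_def
    using someI_ex[OF arena_has_successor[OF arena]] by auto
  moreover have "pos src s t = f t" if "t \<le> N" for t
    using that
  proof (induct t)
    case 0
    show ?case by (simp add: pos_0 f0)
  next
    case (Suc t)
    then have "last (hist src s t) = f t" by (simp add: pos_def)
    then show ?case
      using f_edge[of t] Suc.prems by (simp add: pos_Suc s_follows_f length_hist)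
  qed
  ultimately show ?thesis using that fN by blast
qed

lemma cost_eq_sum_step_cost:
  assumes arena: "arena E src tgt" and blind: "blind_strategy E (P k)"
    and at_tgt: "pos src (P k) T = tgt"
  shows "cost E src tgt n P k = enat (\<Sum>t<T. step_cost E src n P k t)"
proof -
  define L where "L = (LEAST t. pos src (P k) t = tgt)"
  have "L \<le> T" unfolding L_def using at_tgt by (rule Least_le)
  have at_tgt_L: "pos src (P k) L = tgt" unfolding L_def using at_tgt by (rule LeastI)
  have "step_cost E src n P k t = 0" if "L \<le> t" for t
  proof -
    have "step_edge src (P k) t = (tgt, tgt)"
      using arena_pos_tgt_absorbing[OF arena blind at_tgt_L] \<open>L \<le> t\<close>
      by (simp add: step_edge_def)
    then show ?thesis using arena by (simp add: step_cost_def arena_def)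
  qed
  then have "(\<Sum>t<T. step_cost E src n P k t) = (\<Sum>t<L. step_cost E src n P k t)"
    using \<open>L \<le> T\<close> by (intro sum.mono_neutral_right) auto
  then show ?thesis using at_tgt unfolding cost_def L_def by auto
qed

definition edge_cost :: "('v \<Rightarrow> 'v \<Rightarrow> (nat \<Rightarrow> nat) option) \<Rightarrow> 'v \<times> 'v \<Rightarrow> nat \<Rightarrow> nat" where
  "edge_cost E e = the (E (fst e) (snd e))"

definition rosenthal_potential ::
    "('v::finite \<Rightarrow> 'v \<Rightarrow> (nat \<Rightarrow> nat) option) \<Rightarrow> ('v \<times> 'v \<Rightarrow> nat) \<Rightarrow> nat" where
  "rosenthal_potential E ld = (\<Sum>e\<in>UNIV. \<Sum>u<ld e. edge_cost E e (Suc u))"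

definition potential :: "('v::finite \<Rightarrow> 'v \<Rightarrow> (nat \<Rightarrow> nat) option) \<Rightarrow> 'v \<Rightarrow> nat \<Rightarrow>
    (nat \<Rightarrow> 'v list \<Rightarrow> 'v) \<Rightarrow> nat \<Rightarrow> nat" where
  "potential E src n P T = (\<Sum>t<T. rosenthal_potential E (load src n P t))"

definition load_others :: "'v \<Rightarrow> nat \<Rightarrow> (nat \<Rightarrow> 'v list \<Rightarrow> 'v) \<Rightarrow> nat \<Rightarrow> nat \<Rightarrow> 'v \<times> 'v \<Rightarrow> nat" where
  "load_others src n P k t e = card {j. j < n \<and> j \<noteq> k \<and> step_edge src (P j) t = e}"

lemma rosenthal_potential_add_player:
  "rosenthal_potential E (\<lambda>e. ld e + (if e = e\<^sub>0 then 1 else 0)) =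
     rosenthal_potential E ld + edge_cost E e\<^sub>0 (Suc (ld e\<^sub>0))"
proof -
  have "(\<Sum>u<ld e + (if e = e\<^sub>0 then 1 else 0). edge_cost E e (Suc u)) =
          (\<Sum>u<ld e. edge_cost E e (Suc u)) + (if e = e\<^sub>0 then edge_cost E e (Suc (ld e)) else 0)"
    for e by simp
  then show ?thesis unfolding rosenthal_potential_def by (simp add: sum.distrib)
qed

lemma load_eq_load_others_plus:
  assumes "k < n"
  shows "load src n P t e = load_others src n P k t e + (if e = step_edge src (P k) t then 1 else 0)"
proof (cases "e = step_edge src (P k) t")
  case True
  then have "{j. j < n \<and> step_edge src (P j) t = e} =
               insert k {j. j < n \<and> j \<noteq> k \<and> step_edge src (P j) t = e}"
    using assms by auto
  then show ?thesis using True unfolding load_def load_others_def by simp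
next
  case False
  then have "{j. j < n \<and> step_edge src (P j) t = e} = {j. j < n \<and> j \<noteq> k \<and> step_edge src (P j) t = e}"
    by auto
  then show ?thesis using False unfolding load_def load_others_def by simp
qed

lemma load_others_fun_upd: "load_others src n (P(k := s)) k = load_others src n P k"
  unfolding load_others_def by (intro ext arg_cong[where f = card]) auto

lemma potential_split:
  assumes "k < n"
  shows "potential E src n P T =
           (\<Sum>t<T. rosenthal_potential E (load_others src n P k t)) + (\<Sum>t<T. step_cost E src n P k t)"
proof -
  have "rosenthal_potential E (load src n P t) =
          rosenthal_potential E (load_others src n P k t) + step_cost E src n P k t" for t
  proof -
    have "load src n P t = (\<lambda>e. load_others src n P k t e + (if e = step_edge src (P k) t then 1 else 0))"
      by (intro ext load_eq_load_others_plus[OF assms])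
    then show ?thesis
      by (simp add: rosenthal_potential_add_player step_cost_def edge_cost_def Let_def)
  qed
  then show ?thesis unfolding potential_def by (simp add: sum.distrib)
qed

definition reach_tgt_by :: "('v \<Rightarrow> 'v \<Rightarrow> (nat \<Rightarrow> nat) option) \<Rightarrow> 'v \<Rightarrow> 'v \<Rightarrow> nat \<Rightarrow>
    (nat \<Rightarrow> 'v list \<Rightarrow> 'v) \<Rightarrow> nat \<Rightarrow> bool" where
  "reach_tgt_by E src tgt n P T \<longleftrightarrow> (\<forall>i<n. blind_strategy E (P i) \<and> pos src (P i) T = tgt)"

lemma reach_tgt_by_mono:
  assumes "arena E src tgt" and "reach_tgt_by E src tgt n P T" and "T \<le> T'"
  shows "reach_tgt_by E src tgt n P T'"
  using assms arena_pos_tgt_absorbing unfolding reach_tgt_by_def by blast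

lemma reach_tgt_by_fun_upd:
  assumes arena: "arena E src tgt" and reach: "reach_tgt_by E src tgt n P T"
    and "blind_strategy E s" and "pos src s T' = tgt"
  shows "reach_tgt_by E src tgt n (P(k := s)) (max T T')"
proof -
  have "pos src s (max T T') = tgt"
    using arena_pos_tgt_absorbing[OF arena \<open>blind_strategy E s\<close> \<open>pos src s T' = tgt\<close>] by simp
  moreover have "reach_tgt_by E src tgt n P (max T T')"
    using reach_tgt_by_mono[OF arena reach] by simp
  ultimately show ?thesis using \<open>blind_strategy E s\<close> unfolding reach_tgt_by_def by simp
qed

lemma potential_horizon_extend:
  assumes arena: "arena E src tgt" and reach: "reach_tgt_by E src tgt n P T" and "T \<le> T'"
  shows "potential E src n P T' = potential E src n P T"
proof -
  have "rosenthal_potential E (load src n P t) = 0" if "T \<le> t" for t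
  proof -
    have "step_edge src (P j) t = (tgt, tgt)" if "j < n" for j
      using reach_tgt_by_mono[OF arena reach, of t] reach_tgt_by_mono[OF arena reach, of "Suc t"]
        \<open>T \<le> t\<close> \<open>j < n\<close>
      by (simp add: reach_tgt_by_def step_edge_def)
    then have idle: "load src n P t e = 0" if "e \<noteq> (tgt, tgt)" for e
      using that unfolding load_def by auto
    have free: "edge_cost E (tgt, tgt) = (\<lambda>_. 0)"
      using arena by (simp add: arena_def edge_cost_def)
    have "(\<Sum>u<load src n P t e. edge_cost E e (Suc u)) = 0" for e
      using idle free by (cases "e = (tgt, tgt)") auto
    then show ?thesis
      unfolding rosenthal_potential_def by simp
  qed
  then show ?thesis
    unfolding potential_def using \<open>T \<le> T'\<close> by (intro sum.mono_neutral_right) auto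
qed

lemma potential_minimiser_no_profitable_deviation:
  assumes arena: "arena E src tgt" and reach: "reach_tgt_by E src tgt n P T"
    and minimal: "\<And>P' T'. reach_tgt_by E src tgt n P' T' \<Longrightarrow> potential E src n P T \<le> potential E src n P' T'"
    and "k < n" and "blind_strategy E s"
  shows "cost E src tgt n P k \<le> cost E src tgt n (P(k := s)) k"
proof (cases "\<exists>t. pos src s t = tgt")
  case False
  then show ?thesis by (simp add: cost_def)
next
  case True
  then obtain T\<^sub>s where "pos src s T\<^sub>s = tgt" by blast
  define T' where "T' = max T T\<^sub>s"
  let ?P' = "P(k := s)"
  have reach': "reach_tgt_by E src tgt n ?P' T'"
    unfolding T'_def using \<open>blind_strategy E s\<close> \<open>pos src s T\<^sub>s = tgt\<close>
    by (rule reach_tgt_by_fun_upd[OF arena reach])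
  have "reach_tgt_by E src tgt n P T'"
    unfolding T'_def by (rule reach_tgt_by_mono[OF arena reach]) simp
  then have "blind_strategy E (P k)" and "pos src (P k) T' = tgt"
    using \<open>k < n\<close> unfolding reach_tgt_by_def by blast+
  then have cost_P: "cost E src tgt n P k = enat (\<Sum>t<T'. step_cost E src n P k t)"
    by (rule cost_eq_sum_step_cost[OF arena])
  have "blind_strategy E (?P' k)" and "pos src (?P' k) T' = tgt"
    using reach' \<open>k < n\<close> unfolding reach_tgt_by_def by blast+
  then have cost_P': "cost E src tgt n ?P' k = enat (\<Sum>t<T'. step_cost E src n ?P' k t)"
    by (rule cost_eq_sum_step_cost[OF arena])
  have "potential E src n P T' = potential E src n P T"
    unfolding T'_def by (rule potential_horizon_extend[OF arena reach]) simp
  also have "\<dots> \<le> potential E src n ?P' T'"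
    by (rule minimal[OF reach'])
  finally show ?thesis
    unfolding cost_P cost_P' potential_split[OF \<open>k < n\<close>] load_others_fun_upd by simp
qed

lemma potential_minimiser_blind_NE:
  assumes arena: "arena E src tgt" and reach: "reach_tgt_by E src tgt n P T"
    and minimal: "\<And>P' T'. reach_tgt_by E src tgt n P' T' \<Longrightarrow> potential E src n P T \<le> potential E src n P' T'"
  shows "blind_NE E src tgt n P"
  unfolding blind_NE_def
proof (intro conjI allI impI)
  fix i assume "i < n"
  then show "blind_strategy E (P i)" using reach by (simp add: reach_tgt_by_def)
next
  fix k assume "k < n"
  then have "blind_strategy E (P k)" using reach by (simp add: reach_tgt_by_def)
  then have "(INF s \<in> {s. blind_strategy E s}. cost E src tgt n (P(k := s)) k) \<le> cost E src tgt n P k"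
    using INF_lower[of "P k" "{s. blind_strategy E s}" "\<lambda>s. cost E src tgt n (P(k := s)) k"]
    by simp
  moreover have "cost E src tgt n P k \<le> (INF s \<in> {s. blind_strategy E s}. cost E src tgt n (P(k := s)) k)"
    using potential_minimiser_no_profitable_deviation[OF arena reach minimal \<open>k < n\<close>]
    by (intro INF_greatest) simp
  ultimately show "cost E src tgt n P k = (INF s \<in> {s. blind_strategy E s}. cost E src tgt n (P(k := s)) k)"
    by (rule antisym[rotated])
qed

theorem lemmaB1:
  fixes E :: "'v::finite \<Rightarrow> 'v \<Rightarrow> (nat \<Rightarrow> nat) option"
    and src tgt :: 'v and n :: nat
  assumes "arena E src tgt"
  shows "\<exists>P. blind_NE E src tgt n P"
proof -
  obtain s T where "blind_strategy E s" and "pos src s T = tgt"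
    using arena_blind_strategy_reaching_tgt[OF assms] .
  then have "reach_tgt_by E src tgt n (\<lambda>_. s) T"
    by (simp add: reach_tgt_by_def)
  then obtain P T' where "reach_tgt_by E src tgt n P T'"
    and "\<And>P'' T''. reach_tgt_by E src tgt n P'' T'' \<Longrightarrow> potential E src n P T' \<le> potential E src n P'' T''"
    using ex_has_least_nat[where P = "case_prod (reach_tgt_by E src tgt n)" and k = "(\<lambda>_. s, T)"
        and m = "case_prod (potential E src n)"] by (fastforce simp: split_paired_all)
  then show ?thesis
    by (intro exI potential_minimiser_blind_NE[OF assms])
qed

end
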